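(* Assume $\mathbb Q\subset k$, let $R=\operatorname{End}_k(A)$ and $D\in\mathcal U^p(R;\Delta)$. The following are equivalent: (a) $D\in\operatorname{HS}^p_k(A;\Delta)$; (b) $\varepsilon^{\mathfrak d}(D)\in\operatorname{Der}_k(A)[[{\bf s}]]_\Delta$ for every $k$-derivation $\mathfrak d:k[[{\bf s}]]_\Delta\to k[[{\bf s}]]_\Delta$; (c) $\varepsilon(D)\in\operatorname{Der}_k(A)[[{\bf s}]]_\Delta$.
   Context: $k$ is a commutative ring, $A$ a commutative $k$-algebra, $R=\operatorname{End}_k(A)$; ${\bf s}=\{s_1,\dots,s_p\}$ commuting variables, ${\bf s}^\alpha=s_1^{\alpha_1}\cdots s_p^{\alpha_p}$, $|\alpha|=\sum\alpha_i$. A co-ideal is a non-empty $\Delta\subset\mathbb N^p$ with $\alpha\in\Delta,\alpha'\le\alpha$ (componentwise) $\Rightarrow\alpha'\in\Delta$. For a ring/group $M$, $M[[{\bf s}]]_\Delta$ is the set of formal sums $\sum_{\alpha\in\Delta}m_\alpha{\bf s}^\alpha$ (truncated product for rings, variables central). $\mathcal U^p(R;\Delta)$ is the group of $r\in R[[{\bf s}]]_\Delta$ with $r_0=1$, $r^*$ the inverse. For a $k$-derivation $\mathfrak d$ of $k[[{\bf s}]]_\Delta$, $\mathfrak d_R(\sum r_\alpha{\bf s}^\alpha)=\sum r_\alpha\mathfrak d({\bf s}^\alpha)$ and $\varepsilon^{\mathfrak d}(r)=r^*\mathfrak d_R(r)$; $\varepsilon(r)=\varepsilon^{\boldsymbol\chi}(r)=r^*\sum_\alpha|\alpha|r_\alpha{\bf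 s}^\alpha$, where $\boldsymbol\chi=\sum_is_i\partial/\partial s_i$. $\operatorname{HS}^p_k(A;\Delta)$ is the set of $D=\sum_{\alpha\in\Delta}D_\alpha{\bf s}^\alpha\in R[[{\bf s}]]_\Delta$ with $D_0=\mathrm{Id}_A$ and $D_\alpha(xy)=\sum_{\beta+\gamma=\alpha}D_\beta(x)D_\gamma(y)$ for all $x,y\in A$, $\alpha\in\Delta$. *)

theory Defs
  imports Main
begin

text \<open>Multi-indices in \<open>\<nat>\<^sup>p\<close> are functions \<open>nat \<Rightarrow> nat\<close> vanishing at \<open>i \<ge> p\<close>;
  the order is the pointwise one (\<open>le_fun\<close>) and \<open>\<alpha> - \<beta>\<close> is pointwise.
  A truncated series in \<open>M[[s]]_\<Delta>\<close> is a function from multi-indices to \<open>M\<close>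
  that vanishes outside \<open>\<Delta>\<close>.
  The commutative \<open>k\<close>-algebra \<open>A\<close> is given by its structure ring homomorphism \<open>\<iota> : k \<rightarrow> A\<close>.\<close>

definition Q_subring :: "'k::comm_ring_1 itself \<Rightarrow> bool" where
  "Q_subring _ \<longleftrightarrow> (\<forall>n::nat. n > 0 \<longrightarrow> (\<exists>u::'k. of_nat n * u = 1))"

definition ring_hom_k :: "('k::comm_ring_1 \<Rightarrow> 'a::comm_ring_1) \<Rightarrow> bool" where
  "ring_hom_k \<iota> \<longleftrightarrow> \<iota> 1 = 1 \<and> (\<forall>a b. \<iota> (a + b) = \<iota> a + \<iota> b) \<and> (\<forall>a b. \<iota> (a * b) = \<iota> a * \<iota> b)"

definition co_ideal :: "nat \<Rightarrow> (nat \<Rightarrow> nat) set \<Rightarrow> bool" where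
  "co_ideal p \<Delta> \<longleftrightarrow> \<Delta> \<noteq> {} \<and> (\<forall>\<alpha>\<in>\<Delta>. \<forall>i\<ge>p. \<alpha> i = 0)
     \<and> (\<forall>\<alpha>\<in>\<Delta>. \<forall>\<beta>. \<beta> \<le> \<alpha> \<longrightarrow> \<beta> \<in> \<Delta>)"

definition mdeg :: "nat \<Rightarrow> (nat \<Rightarrow> nat) \<Rightarrow> nat" where
  "mdeg p \<alpha> = (\<Sum>i<p. \<alpha> i)"

definition End_k :: "('k::comm_ring_1 \<Rightarrow> 'a::comm_ring_1) \<Rightarrow> ('a \<Rightarrow> 'a) set" where
  "End_k \<iota> = {f. (\<forall>x y. f (x + y) = f x + f y) \<and> (\<forall>c x. f (\<iota> c * x) = \<iota> c * f x)}"

definition Der_k :: "('k::comm_ring_1 \<Rightarrow> 'a::comm_ring_1) \<Rightarrow> ('a \<Rightarrow> 'a) set" where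
  "Der_k \<iota> = {f \<in> End_k \<iota>. \<forall>x y. f (x * y) = x * f y + f x * y}"

definition ser_on :: "(nat \<Rightarrow> nat) set \<Rightarrow> 'm \<Rightarrow> 'm set \<Rightarrow> ((nat \<Rightarrow> nat) \<Rightarrow> 'm) set" where
  "ser_on \<Delta> z M = {r. (\<forall>\<alpha>\<in>\<Delta>. r \<alpha> \<in> M) \<and> (\<forall>\<alpha>. \<alpha> \<notin> \<Delta> \<longrightarrow> r \<alpha> = z)}"

definition ser_mult :: "(nat \<Rightarrow> nat) set \<Rightarrow> ((nat \<Rightarrow> nat) \<Rightarrow> 'a::comm_ring_1 \<Rightarrow> 'a)
    \<Rightarrow> ((nat \<Rightarrow> nat) \<Rightarrow> 'a \<Rightarrow> 'a) \<Rightarrow> ((nat \<Rightarrow> nat) \<Rightarrow> 'a \<Rightarrow> 'a)" where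
  "ser_mult \<Delta> r r' = (\<lambda>\<alpha>. if \<alpha> \<in> \<Delta> then (\<lambda>x. \<Sum>\<beta>\<in>{\<beta>. \<beta> \<le> \<alpha>}. r \<beta> (r' (\<alpha> - \<beta>) x))
                              else (\<lambda>_. 0))"

definition ser_one :: "(nat \<Rightarrow> nat) set \<Rightarrow> ((nat \<Rightarrow> nat) \<Rightarrow> 'a::comm_ring_1 \<Rightarrow> 'a)" where
  "ser_one \<Delta> = (\<lambda>\<alpha>. if \<alpha> = (\<lambda>_. 0) then id else (\<lambda>_. 0))"

definition U_group :: "('k::comm_ring_1 \<Rightarrow> 'a::comm_ring_1) \<Rightarrow> (nat \<Rightarrow> nat) set
    \<Rightarrow> ((nat \<Rightarrow> nat) \<Rightarrow> 'a \<Rightarrow> 'a) set" where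
  "U_group \<iota> \<Delta> = {r \<in> ser_on \<Delta> (\<lambda>_. 0) (End_k \<iota>). r (\<lambda>_. 0) = id}"

definition ser_inv :: "('k::comm_ring_1 \<Rightarrow> 'a::comm_ring_1) \<Rightarrow> (nat \<Rightarrow> nat) set
    \<Rightarrow> ((nat \<Rightarrow> nat) \<Rightarrow> 'a \<Rightarrow> 'a) \<Rightarrow> ((nat \<Rightarrow> nat) \<Rightarrow> 'a \<Rightarrow> 'a)" where
  "ser_inv \<iota> \<Delta> r = (THE r'. r' \<in> ser_on \<Delta> (\<lambda>_. 0) (End_k \<iota>) \<and> ser_mult \<Delta> r' r = ser_one \<Delta>)"

definition kser_mult :: "(nat \<Rightarrow> nat) set \<Rightarrow> ((nat \<Rightarrow> nat) \<Rightarrow> 'k::comm_ring_1)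
    \<Rightarrow> ((nat \<Rightarrow> nat) \<Rightarrow> 'k) \<Rightarrow> ((nat \<Rightarrow> nat) \<Rightarrow> 'k)" where
  "kser_mult \<Delta> f g = (\<lambda>\<alpha>. if \<alpha> \<in> \<Delta> then (\<Sum>\<beta>\<in>{\<beta>. \<beta> \<le> \<alpha>}. f \<beta> * g (\<alpha> - \<beta>)) else 0)"

definition kmono :: "(nat \<Rightarrow> nat) \<Rightarrow> ((nat \<Rightarrow> nat) \<Rightarrow> 'k::comm_ring_1)" where
  "kmono \<alpha> = (\<lambda>\<gamma>. if \<gamma> = \<alpha> then 1 else 0)"

definition is_kser_derivation :: "(nat \<Rightarrow> nat) set
    \<Rightarrow> (((nat \<Rightarrow> nat) \<Rightarrow> 'k::comm_ring_1) \<Rightarrow> ((nat \<Rightarrow> nat) \<Rightarrow> 'k)) \<Rightarrow> bool" where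
  "is_kser_derivation \<Delta> d \<longleftrightarrow>
     (\<forall>f \<in> ser_on \<Delta> 0 UNIV. d f \<in> ser_on \<Delta> 0 UNIV) \<and>
     (\<forall>f \<in> ser_on \<Delta> 0 UNIV. \<forall>g \<in> ser_on \<Delta> 0 UNIV. d (\<lambda>\<alpha>. f \<alpha> + g \<alpha>) = (\<lambda>\<alpha>. d f \<alpha> + d g \<alpha>)) \<and>
     (\<forall>f \<in> ser_on \<Delta> 0 UNIV. \<forall>c. d (\<lambda>\<alpha>. c * f \<alpha>) = (\<lambda>\<alpha>. c * d f \<alpha>)) \<and>
     (\<forall>f \<in> ser_on \<Delta> 0 UNIV. \<forall>g \<in> ser_on \<Delta> 0 UNIV.
        d (kser_mult \<Delta> f g) = (\<lambda>\<alpha>. kser_mult \<Delta> f (d g) \<alpha> + kser_mult \<Delta> (d f) g \<alpha>))"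

text \<open>\<open>\<dd>_R(\<Sum> r_\<alpha> s^\<alpha>) = \<Sum> r_\<alpha> \<dd>(s^\<alpha>)\<close>; for each \<open>\<gamma>\<close> only the (finitely many)
  \<open>\<alpha>\<close> with nonzero \<open>\<gamma>\<close>-coefficient of \<open>\<dd>(s^\<alpha>)\<close> contribute.\<close>
definition dR :: "('k::comm_ring_1 \<Rightarrow> 'a::comm_ring_1) \<Rightarrow> (nat \<Rightarrow> nat) set
    \<Rightarrow> (((nat \<Rightarrow> nat) \<Rightarrow> 'k) \<Rightarrow> ((nat \<Rightarrow> nat) \<Rightarrow> 'k))
    \<Rightarrow> ((nat \<Rightarrow> nat) \<Rightarrow> 'a \<Rightarrow> 'a) \<Rightarrow> ((nat \<Rightarrow> nat) \<Rightarrow> 'a \<Rightarrow> 'a)" where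
  "dR \<iota> \<Delta> d r = (\<lambda>\<gamma> x. \<Sum>\<alpha>\<in>{\<alpha>\<in>\<Delta>. d (kmono \<alpha>) \<gamma> \<noteq> 0}. \<iota> (d (kmono \<alpha>) \<gamma>) * r \<alpha> x)"

definition eps_d :: "('k::comm_ring_1 \<Rightarrow> 'a::comm_ring_1) \<Rightarrow> (nat \<Rightarrow> nat) set
    \<Rightarrow> (((nat \<Rightarrow> nat) \<Rightarrow> 'k) \<Rightarrow> ((nat \<Rightarrow> nat) \<Rightarrow> 'k))
    \<Rightarrow> ((nat \<Rightarrow> nat) \<Rightarrow> 'a \<Rightarrow> 'a) \<Rightarrow> ((nat \<Rightarrow> nat) \<Rightarrow> 'a \<Rightarrow> 'a)" where
  "eps_d \<iota> \<Delta> d r = ser_mult \<Delta> (ser_inv \<iota> \<Delta> r) (dR \<iota> \<Delta> d r)"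

definition eps :: "('k::comm_ring_1 \<Rightarrow> 'a::comm_ring_1) \<Rightarrow> nat \<Rightarrow> (nat \<Rightarrow> nat) set
    \<Rightarrow> ((nat \<Rightarrow> nat) \<Rightarrow> 'a \<Rightarrow> 'a) \<Rightarrow> ((nat \<Rightarrow> nat) \<Rightarrow> 'a \<Rightarrow> 'a)" where
  "eps \<iota> p \<Delta> r = ser_mult \<Delta> (ser_inv \<iota> \<Delta> r) (\<lambda>\<alpha> x. of_nat (mdeg p \<alpha>) * r \<alpha> x)"

definition HS :: "('k::comm_ring_1 \<Rightarrow> 'a::comm_ring_1) \<Rightarrow> (nat \<Rightarrow> nat) set
    \<Rightarrow> ((nat \<Rightarrow> nat) \<Rightarrow> 'a \<Rightarrow> 'a) set" where
  "HS \<iota> \<Delta> = {D \<in> ser_on \<Delta> (\<lambda>_. 0) (End_k \<iota>). D (\<lambda>_. 0) = id \<and>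
     (\<forall>\<alpha>\<in>\<Delta>. \<forall>x y. D \<alpha> (x * y) = (\<Sum>\<beta>\<in>{\<beta>. \<beta> \<le> \<alpha>}. D \<beta> x * D (\<alpha> - \<beta>) y))}"

end

theory Submission
  imports Defs "HOL-Library.Function_Algebras"
begin

text \<open>Put \<open>e = D\<^sup>* \<dd>\<^sub>R(D)\<close>, so that \<open>D e = \<dd>\<^sub>R(D)\<close>. Applying \<open>D\<close> coefficientwise to the
  Leibniz expression \<open>x e\<^sub>\<alpha>(y) + e\<^sub>\<alpha>(x) y\<close> and using the Hasse--Schmidt identities of \<open>D\<close> gives
  the twisted Leibniz expression \<open>\<Sum>\<^sub>\<beta> D\<^sub>\<beta>(x) (De)\<^bsub>\<alpha>-\<beta>\<^esub>(y) + (De)\<^sub>\<beta>(x) D\<^bsub>\<alpha>-\<beta>\<^esub>(y)\<close>. When \<open>D\<close> is a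
  Hasse--Schmidt derivation, \<open>\<dd>\<^sub>R(D)\<close> satisfies exactly this twisted Leibniz rule, because
  \<open>\<dd>(s\<^sup>\<beta> s\<^sup>\<mu>) = s\<^sup>\<beta> \<dd>(s\<^sup>\<mu>) + \<dd>(s\<^sup>\<beta>) s\<^sup>\<mu>\<close>; so \<open>D\<close> annihilates the Leibniz defect of \<open>e\<close>, and
  since \<open>D\<close> is unitriangular the defect is zero. This gives (a) \<open>\<Longrightarrow>\<close> (b), and (c) is the case of
  the Euler derivation \<open>\<chi>\<close>, for which \<open>\<chi>\<^sub>R(D) = \<Sum> |\<alpha>| D\<^sub>\<alpha> s\<^sup>\<alpha>\<close>. Conversely, if \<open>\<epsilon>(D)\<close> is a series
  of derivations, the same computation yields \<open>|\<alpha>|\<close> times the Hasse--Schmidt identity in degree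
  \<open>\<alpha>\<close> from the identities in lower degrees, and \<open>|\<alpha>|\<close> is invertible because \<open>\<rat> \<subseteq> k\<close>.\<close>

section \<open>Multi-indices\<close>

lemma finite_bounded_indices:
  "finite {\<beta> :: nat \<Rightarrow> nat. (\<forall>i\<ge>p. \<beta> i = 0) \<and> (\<forall>i. \<beta> i \<le> n)}"
proof (induction p)
  case 0
  have "{\<beta> :: nat \<Rightarrow> nat. (\<forall>i\<ge>0. \<beta> i = 0) \<and> (\<forall>i. \<beta> i \<le> n)} \<subseteq> {0}"
    by auto
  then show ?case
    using finite_subset by blast
next
  case (Suc p)
  let ?S = "{\<beta> :: nat \<Rightarrow> nat. (\<forall>i\<ge>p. \<beta> i = 0) \<and> (\<forall>i. \<beta> i \<le> n)}"
  have "{\<beta> :: nat \<Rightarrow> nat. (\<forall>i\<ge>Suc p. \<beta> i = 0) \<and> (\<forall>i. \<beta> i \<le> n)}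
          \<subseteq> (\<lambda>(\<beta>, k). \<beta>(p := k)) ` (?S \<times> {..n})"
  proof
    fix \<beta> assume "\<beta> \<in> {\<beta>. (\<forall>i\<ge>Suc p. \<beta> i = 0) \<and> (\<forall>i. \<beta> i \<le> n)}"
    then have "(\<beta>(p := 0), \<beta> p) \<in> ?S \<times> {..n}"
      by auto
    moreover have "\<beta> = (\<lambda>(\<beta>, k). \<beta>(p := k)) (\<beta>(p := 0), \<beta> p)"
      by auto
    ultimately show "\<beta> \<in> (\<lambda>(\<beta>, k). \<beta>(p := k)) ` (?S \<times> {..n})"
      by blast
  qed
  moreover have "finite ((\<lambda>(\<beta>, k). \<beta>(p := k)) ` (?S \<times> {..n}))"
    using Suc by simp
  ultimately show ?case
    by (rule finite_subset)
qed

lemma mdeg_diff: "\<beta> \<le> \<alpha> \<Longrightarrow> mdeg p \<alpha> = mdeg p \<beta> + mdeg p (\<alpha> - \<beta>)"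
  by (simp add: mdeg_def le_fun_def sum.distrib[symmetric])

lemma mdeg_zero [simp]: "mdeg p 0 = 0"
  by (simp add: mdeg_def)

lemma index_add_diff: "(\<beta> :: nat \<Rightarrow> nat) \<le> \<alpha> \<Longrightarrow> \<beta> + (\<alpha> - \<beta>) = \<alpha>"
  by (simp add: le_fun_def fun_eq_iff)

lemma index_le_add: "(\<beta> :: nat \<Rightarrow> nat) \<le> \<beta> + \<mu>"
  by (simp add: le_fun_def)

lemma index_diff_le: "(\<alpha> :: nat \<Rightarrow> nat) - \<beta> \<le> \<alpha>"
  by (simp add: le_fun_def)

lemma index_diff_diff: "(\<beta> :: nat \<Rightarrow> nat) \<le> \<alpha> \<Longrightarrow> \<alpha> - (\<alpha> - \<beta>) = \<beta>"
  by (simp add: le_fun_def fun_eq_iff)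

lemma index_diff_eq_zero_iff: "(\<beta> :: nat \<Rightarrow> nat) \<le> \<alpha> \<Longrightarrow> \<alpha> - \<beta> = 0 \<longleftrightarrow> \<beta> = \<alpha>"
  by (auto simp: le_fun_def fun_eq_iff intro: antisym)

lemma index_eq_add_iff: "(\<beta> \<le> \<gamma> \<and> \<gamma> - \<beta> = \<mu>) \<longleftrightarrow> \<gamma> = \<beta> + (\<mu> :: nat \<Rightarrow> nat)"
  by (auto simp: le_fun_def fun_eq_iff) (metis le_add_diff_inverse)

lemma index_le_add_iff: "(\<mu> :: nat \<Rightarrow> nat) \<le> \<alpha> \<Longrightarrow> \<nu> \<le> \<alpha> - \<mu> \<longleftrightarrow> \<mu> + \<nu> \<le> \<alpha>"
  by (auto simp: le_fun_def) (metis add.commute le_diff_conv2)+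

lemma index_diff_mono: "(\<mu> :: nat \<Rightarrow> nat) \<le> \<beta> \<Longrightarrow> \<beta> \<le> \<alpha> \<Longrightarrow> \<beta> - \<mu> \<le> \<alpha> - \<mu>"
  by (auto simp: le_fun_def intro: diff_le_mono)

lemma index_diff_diff_cancel: "(\<mu> :: nat \<Rightarrow> nat) \<le> \<beta> \<Longrightarrow> \<beta> \<le> \<alpha> \<Longrightarrow> \<alpha> - \<mu> - (\<beta> - \<mu>) = \<alpha> - \<beta>"
  by (auto simp: le_fun_def fun_eq_iff)

locale co_ideal_setting =
  fixes p :: nat and \<Delta> :: "(nat \<Rightarrow> nat) set"
  assumes co_ideal: "co_ideal p \<Delta>"
begin

lemma down_closed: "\<alpha> \<in> \<Delta> \<Longrightarrow> \<beta> \<le> \<alpha> \<Longrightarrow> \<beta> \<in> \<Delta>"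
  using co_ideal by (auto simp: co_ideal_def)

lemma vanishes_beyond_p: "\<alpha> \<in> \<Delta> \<Longrightarrow> p \<le> i \<Longrightarrow> \<alpha> i = 0"
  using co_ideal by (simp add: co_ideal_def)

lemma zero_index_in: "(0 :: nat \<Rightarrow> nat) \<in> \<Delta>"
proof -
  obtain \<alpha> where "\<alpha> \<in> \<Delta>"
    using co_ideal by (auto simp: co_ideal_def)
  then show ?thesis
    by (rule down_closed) (simp add: le_fun_def)
qed

lemma diff_in: "\<alpha> \<in> \<Delta> \<Longrightarrow> \<alpha> - \<beta> \<in> \<Delta>"
  using down_closed index_diff_le by blast

lemma component_le_mdeg: "\<alpha> \<in> \<Delta> \<Longrightarrow> \<alpha> i \<le> mdeg p \<alpha>"
proof (cases "i < p")
  case True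
  then have "(\<Sum>j\<in>{i}. \<alpha> j) \<le> (\<Sum>j<p. \<alpha> j)"
    by (intro sum_mono2) auto
  then show ?thesis
    by (simp add: mdeg_def)
next
  case False
  moreover assume "\<alpha> \<in> \<Delta>"
  ultimately show ?thesis
    by (simp add: vanishes_beyond_p)
qed

definition deg_le :: "nat \<Rightarrow> (nat \<Rightarrow> nat) set" where
  "deg_le n = {\<alpha> \<in> \<Delta>. mdeg p \<alpha> \<le> n}"

lemma finite_deg_le: "finite (deg_le n)"
proof (rule finite_subset[OF _ finite_bounded_indices[of p n]])
  show "deg_le n \<subseteq> {\<beta>. (\<forall>i\<ge>p. \<beta> i = 0) \<and> (\<forall>i. \<beta> i \<le> n)}"
    using vanishes_beyond_p component_le_mdeg by (fastforce simp: deg_le_def intro: order.trans)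
qed

lemma finite_below: "\<alpha> \<in> \<Delta> \<Longrightarrow> finite {\<beta>. \<beta> \<le> \<alpha>}"
  by (rule finite_subset[OF _ finite_deg_le[of "mdeg p \<alpha>"]])
     (auto intro: down_closed simp: mdeg_diff deg_le_def)

lemma mdeg_pos: "\<alpha> \<in> \<Delta> \<Longrightarrow> \<alpha> \<noteq> 0 \<Longrightarrow> 0 < mdeg p \<alpha>"
  using component_le_mdeg by (fastforce simp: fun_eq_iff)

lemma mdeg_less: "\<alpha> \<in> \<Delta> \<Longrightarrow> \<beta> \<le> \<alpha> \<Longrightarrow> \<beta> \<noteq> \<alpha> \<Longrightarrow> mdeg p \<beta> < mdeg p \<alpha>"
  using mdeg_pos[OF diff_in] mdeg_diff index_diff_eq_zero_iff by fastforce

lemma mdeg_diff_less: "\<alpha> \<in> \<Delta> \<Longrightarrow> \<beta> \<le> \<alpha> \<Longrightarrow> \<beta> \<noteq> 0 \<Longrightarrow> mdeg p (\<alpha> - \<beta>) < mdeg p \<alpha>"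
  using mdeg_pos[OF down_closed] mdeg_diff by fastforce

lemma sum_below_reflect:
  "\<alpha> \<in> \<Delta> \<Longrightarrow> (\<Sum>\<beta> | \<beta> \<le> \<alpha>. f \<beta> (\<alpha> - \<beta>)) = (\<Sum>\<beta> | \<beta> \<le> \<alpha>. f (\<alpha> - \<beta>) \<beta>)"
  by (rule sum.reindex_bij_witness[where i="\<lambda>\<beta>. \<alpha> - \<beta>" and j="\<lambda>\<beta>. \<alpha> - \<beta>"])
     (auto simp: index_diff_diff index_diff_le)

lemma sum_below_assoc:
  assumes \<alpha>: "\<alpha> \<in> \<Delta>"
  shows "(\<Sum>\<beta> | \<beta> \<le> \<alpha>. \<Sum>\<mu> | \<mu> \<le> \<beta>. g \<mu> (\<beta> - \<mu>) (\<alpha> - \<beta>))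
       = (\<Sum>\<mu> | \<mu> \<le> \<alpha>. \<Sum>\<nu> | \<nu> \<le> \<alpha> - \<mu>. g \<mu> \<nu> (\<alpha> - \<mu> - \<nu>))"
proof -
  have fin: "finite {\<beta>. \<beta> \<le> \<alpha>}" "\<forall>\<beta>\<in>{\<beta>. \<beta> \<le> \<alpha>}. finite {\<mu>. \<mu> \<le> \<beta>}"
    "\<forall>\<mu>\<in>{\<mu>. \<mu> \<le> \<alpha>}. finite {\<nu>. \<nu> \<le> \<alpha> - \<mu>}"
    using finite_below down_closed diff_in \<alpha> by blast+
  have reindex: "(\<Sum>(\<beta>, \<mu>) \<in> Sigma {\<beta>. \<beta> \<le> \<alpha>} (\<lambda>\<beta>. {\<mu>. \<mu> \<le> \<beta>}). g \<mu> (\<beta> - \<mu>) (\<alpha> - \<beta>))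
      = (\<Sum>(\<mu>, \<nu>) \<in> Sigma {\<mu>. \<mu> \<le> \<alpha>} (\<lambda>\<mu>. {\<nu>. \<nu> \<le> \<alpha> - \<mu>}). g \<mu> \<nu> (\<alpha> - \<mu> - \<nu>))"
    by (rule sum.reindex_bij_witness[where i="\<lambda>(\<mu>, \<nu>). (\<mu> + \<nu>, \<mu>)" and j="\<lambda>(\<beta>, \<mu>). (\<mu>, \<beta> - \<mu>)"])
       (auto simp: index_add_diff index_le_add index_le_add_iff index_diff_mono index_diff_diff_cancel
         intro: order.trans)
  show ?thesis
    using reindex by (simp add: sum.Sigma[OF fin(1,2)] sum.Sigma[OF fin(1,3)])
qed

lemma sum_below_pairs:
  fixes T :: "(nat \<Rightarrow> nat) set"
  assumes T: "finite T" "\<And>\<alpha> \<beta>. \<alpha> \<in> T \<Longrightarrow> \<beta> \<le> \<alpha> \<Longrightarrow> \<beta> \<in> T"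
  shows "(\<Sum>\<alpha>\<in>T. \<Sum>\<beta> | \<beta> \<le> \<alpha>. g \<alpha> \<beta>)
       = (\<Sum>\<beta>\<in>T. \<Sum>\<mu>\<in>T. if \<beta> + \<mu> \<in> T then g (\<beta> + \<mu>) \<beta> else 0)"
proof -
  have fin: "\<forall>\<alpha>\<in>T. finite {\<beta>. \<beta> \<le> \<alpha>}"
    using T by (metis finite_subset mem_Collect_eq subsetI)
  have "(\<Sum>(\<alpha>, \<beta>) \<in> Sigma T (\<lambda>\<alpha>. {\<beta>. \<beta> \<le> \<alpha>}). g \<alpha> \<beta>)
      = (\<Sum>(\<beta>, \<mu>) \<in> {(\<beta>, \<mu>) \<in> T \<times> T. \<beta> + \<mu> \<in> T}. g (\<beta> + \<mu>) \<beta>)"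
    by (rule sum.reindex_bij_witness[where i="\<lambda>(\<beta>, \<mu>). (\<beta> + \<mu>, \<beta>)" and j="\<lambda>(\<alpha>, \<beta>). (\<beta>, \<alpha> - \<beta>)"])
       (auto simp: index_add_diff index_le_add intro: T(2) index_diff_le)
  also have "\<dots> = (\<Sum>(\<beta>, \<mu>) \<in> T \<times> T. if \<beta> + \<mu> \<in> T then g (\<beta> + \<mu>) \<beta> else 0)"
    by (rule sum.mono_neutral_cong_left) (auto simp: T(1) split: if_splits)
  finally show ?thesis
    by (simp add: sum.Sigma[OF T(1) fin] sum.cartesian_product)
qed

section \<open>Derivations of \<open>k[[s]]\<^sub>\<Delta>\<close>\<close>

lemma kmono_in_series: "\<alpha> \<in> \<Delta> \<Longrightarrow> kmono \<alpha> \<in> ser_on \<Delta> 0 UNIV"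
  by (auto simp: ser_on_def kmono_def)

lemma kser_mult_kmono_left:
  assumes "\<gamma> \<in> \<Delta>"
  shows "kser_mult \<Delta> (kmono \<beta>) f \<gamma> = (if \<beta> \<le> \<gamma> then f (\<gamma> - \<beta>) else 0)"
proof -
  have "kser_mult \<Delta> (kmono \<beta>) f \<gamma> = (\<Sum>\<beta>' | \<beta>' \<le> \<gamma>. if \<beta>' = \<beta> then f (\<gamma> - \<beta>') else 0)"
    using assms by (auto simp: kser_mult_def kmono_def intro!: sum.cong)
  then show ?thesis
    using finite_below[OF assms] by (simp add: sum.delta)
qed

lemma kser_mult_kmono_right:
  assumes "\<gamma> \<in> \<Delta>"
  shows "kser_mult \<Delta> f (kmono \<mu>) \<gamma> = (if \<mu> \<le> \<gamma> then f (\<gamma> - \<mu>) else 0)"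
proof -
  have "kser_mult \<Delta> f (kmono \<mu>) \<gamma> = (\<Sum>\<beta> | \<beta> \<le> \<gamma>. f (\<gamma> - \<beta>) * kmono \<mu> \<beta>)"
    using assms sum_below_reflect[OF assms, of "\<lambda>\<beta> \<nu>. f \<beta> * kmono \<mu> \<nu>"]
    by (simp add: kser_mult_def)
  also have "\<dots> = (\<Sum>\<beta> | \<beta> \<le> \<gamma>. if \<beta> = \<mu> then f (\<gamma> - \<beta>) else 0)"
    by (auto simp: kmono_def intro!: sum.cong)
  finally show ?thesis
    using finite_below[OF assms] by (simp add: sum.delta)
qed

lemma kser_mult_kmono_kmono:
  "kser_mult \<Delta> (kmono \<beta>) (kmono \<mu>) = (if \<beta> + \<mu> \<in> \<Delta> then kmono (\<beta> + \<mu>) else (\<lambda>_. 0))"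
proof
  fix \<gamma>
  show "kser_mult \<Delta> (kmono \<beta>) (kmono \<mu>) \<gamma> = (if \<beta> + \<mu> \<in> \<Delta> then kmono (\<beta> + \<mu>) else (\<lambda>_. 0)) \<gamma>"
  proof (cases "\<gamma> \<in> \<Delta>")
    case True
    have "kser_mult \<Delta> (kmono \<beta>) (kmono \<mu>) \<gamma> = (if \<beta> \<le> \<gamma> then kmono \<mu> (\<gamma> - \<beta>) else 0)"
      by (rule kser_mult_kmono_left[OF True])
    then show ?thesis
      using True index_eq_add_iff[of \<beta> \<gamma> \<mu>] by (auto simp: kmono_def)
  qed (auto simp: kser_mult_def kmono_def)
qed

context
  fixes d :: "((nat \<Rightarrow> nat) \<Rightarrow> 'k::comm_ring_1) \<Rightarrow> ((nat \<Rightarrow> nat) \<Rightarrow> 'k)"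
  assumes derivation: "is_kser_derivation \<Delta> d"
begin

lemma derivation_zero: "d (\<lambda>_. 0) = (\<lambda>_. 0)"
proof -
  have zero: "(\<lambda>_. 0) \<in> ser_on \<Delta> 0 (UNIV :: 'k set)"
    by (simp add: ser_on_def)
  have "\<forall>f\<in>ser_on \<Delta> 0 UNIV. \<forall>c. d (\<lambda>\<alpha>. c * f \<alpha>) = (\<lambda>\<alpha>. c * d f \<alpha>)"
    using derivation by (simp add: is_kser_derivation_def)
  from spec[OF bspec[OF this zero], of 0] show ?thesis
    by simp
qed

lemma derivation_kser_mult:
  "f \<in> ser_on \<Delta> 0 UNIV \<Longrightarrow> g \<in> ser_on \<Delta> 0 UNIV \<Longrightarrow>
    d (kser_mult \<Delta> f g) = (\<lambda>\<alpha>. kser_mult \<Delta> f (d g) \<alpha> + kser_mult \<Delta> (d f) g \<alpha>)"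
  using derivation by (simp add: is_kser_derivation_def)

lemma derivation_kmono_outside: "\<alpha> \<in> \<Delta> \<Longrightarrow> \<gamma> \<notin> \<Delta> \<Longrightarrow> d (kmono \<alpha>) \<gamma> = 0"
proof -
  assume "\<alpha> \<in> \<Delta>" "\<gamma> \<notin> \<Delta>"
  moreover have "\<forall>f \<in> ser_on \<Delta> 0 UNIV. d f \<in> ser_on \<Delta> 0 UNIV"
    using derivation by (simp add: is_kser_derivation_def)
  ultimately show ?thesis
    using kmono_in_series unfolding ser_on_def by blast
qed

text \<open>Leibniz's rule for \<open>\<dd>(s\<^sup>\<beta> s\<^sup>\<mu>)\<close>, read off at the coefficient of \<open>s\<^sup>\<gamma>\<close>.\<close>
lemma derivation_kmono_add:
  assumes "\<beta> \<in> \<Delta>" "\<mu> \<in> \<Delta>" "\<gamma> \<in> \<Delta>"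
  shows "(if \<beta> + \<mu> \<in> \<Delta> then d (kmono (\<beta> + \<mu>)) \<gamma> else 0)
       = (if \<beta> \<le> \<gamma> then d (kmono \<mu>) (\<gamma> - \<beta>) else 0)
         + (if \<mu> \<le> \<gamma> then d (kmono \<beta>) (\<gamma> - \<mu>) else 0)"
proof -
  have "(if \<beta> + \<mu> \<in> \<Delta> then d (kmono (\<beta> + \<mu>)) \<gamma> else 0)
      = d (kser_mult \<Delta> (kmono \<beta>) (kmono \<mu>)) \<gamma>"
    by (simp add: kser_mult_kmono_kmono derivation_zero)
  also have "\<dots> = kser_mult \<Delta> (kmono \<beta>) (d (kmono \<mu>)) \<gamma> + kser_mult \<Delta> (d (kmono \<beta>)) (kmono \<mu>) \<gamma>"
    by (simp add: derivation_kser_mult kmono_in_series assms(1,2))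
  finally show ?thesis
    by (simp only: kser_mult_kmono_left[OF assms(3)] kser_mult_kmono_right[OF assms(3)])
qed

text \<open>Split off one variable, \<open>s\<^sup>\<alpha> = s\<^sub>i s\<^bsup>\<alpha>-\<epsilon>\<^esup>\<close>, and induct on \<open>|\<alpha>|\<close>.\<close>
lemma derivation_kmono_degree:
  "\<alpha> \<in> \<Delta> \<Longrightarrow> d (kmono \<alpha>) \<gamma> \<noteq> 0 \<Longrightarrow> mdeg p \<alpha> \<le> mdeg p \<gamma> + 1"
proof (induction "mdeg p \<alpha>" arbitrary: \<alpha> \<gamma> rule: less_induct)
  case less
  show ?case
  proof (cases "mdeg p \<alpha> \<le> 1")
    case False
    have \<gamma>: "\<gamma> \<in> \<Delta>"
      using derivation_kmono_outside less.prems by blast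
    have "\<alpha> \<noteq> 0"
      using False by auto
    then obtain i where "\<alpha> i \<noteq> 0"
      by (auto simp: fun_eq_iff)
    then have "i < p"
      using vanishes_beyond_p[OF less.prems(1), of i] by (cases "i < p") auto
    define \<epsilon> where "\<epsilon> = (\<lambda>j. if j = i then 1 else 0 :: nat)"
    have \<epsilon>: "\<epsilon> \<le> \<alpha>" "mdeg p \<epsilon> = 1"
      using \<open>\<alpha> i \<noteq> 0\<close> \<open>i < p\<close> by (auto simp: \<epsilon>_def le_fun_def mdeg_def)
    have deg_\<alpha>: "mdeg p \<alpha> = 1 + mdeg p (\<alpha> - \<epsilon>)"
      using mdeg_diff[OF \<epsilon>(1)] \<epsilon>(2) by simp
    have "d (kmono \<alpha>) \<gamma> = (if \<epsilon> \<le> \<gamma> then d (kmono (\<alpha> - \<epsilon>)) (\<gamma> - \<epsilon>) else 0)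
                          + (if \<alpha> - \<epsilon> \<le> \<gamma> then d (kmono \<epsilon>) (\<gamma> - (\<alpha> - \<epsilon>)) else 0)"
      using derivation_kmono_add[OF down_closed[OF less.prems(1) \<epsilon>(1)] diff_in[OF less.prems(1), of \<epsilon>] \<gamma>]
      by (simp add: index_add_diff[OF \<epsilon>(1)] less.prems(1))
    then consider "\<epsilon> \<le> \<gamma>" "d (kmono (\<alpha> - \<epsilon>)) (\<gamma> - \<epsilon>) \<noteq> 0" | "\<alpha> - \<epsilon> \<le> \<gamma>"
      using less.prems(2) by (auto split: if_splits)
    then show ?thesis
    proof cases
      case 1
      then have "mdeg p (\<alpha> - \<epsilon>) \<le> mdeg p (\<gamma> - \<epsilon>) + 1"
        using less.hyps[OF _ diff_in[OF less.prems(1), of \<epsilon>] 1(2)] deg_\<alpha> by simp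
      then show ?thesis
        using mdeg_diff[OF 1(1), of p] \<epsilon>(2) deg_\<alpha> by simp
    next
      case 2
      then show ?thesis
        using mdeg_diff[OF 2, of p] deg_\<alpha> by simp
    qed
  qed simp
qed

end

definition euler_derivation :: "((nat \<Rightarrow> nat) \<Rightarrow> 'k::comm_ring_1) \<Rightarrow> ((nat \<Rightarrow> nat) \<Rightarrow> 'k)" where
  "euler_derivation f \<alpha> = of_nat (mdeg p \<alpha>) * f \<alpha>"

lemma euler_derivation_kser_mult:
  "euler_derivation (kser_mult \<Delta> f g)
     = (\<lambda>\<alpha>. kser_mult \<Delta> f (euler_derivation g) \<alpha> + kser_mult \<Delta> (euler_derivation f) g \<alpha>)"
proof
  fix \<alpha>
  show "euler_derivation (kser_mult \<Delta> f g) \<alpha>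
      = kser_mult \<Delta> f (euler_derivation g) \<alpha> + kser_mult \<Delta> (euler_derivation f) g \<alpha>"
  proof (cases "\<alpha> \<in> \<Delta>")
    case True
    have "of_nat (mdeg p \<alpha>) * (f \<beta> * g (\<alpha> - \<beta>))
        = f \<beta> * (of_nat (mdeg p (\<alpha> - \<beta>)) * g (\<alpha> - \<beta>)) + of_nat (mdeg p \<beta>) * f \<beta> * g (\<alpha> - \<beta>)"
      if "\<beta> \<le> \<alpha>" for \<beta>
      using mdeg_diff[OF that, of p] by (simp add: algebra_simps)
    then show ?thesis
      using True by (simp add: euler_derivation_def kser_mult_def sum_distrib_left sum.distrib)
  qed (simp add: euler_derivation_def kser_mult_def)
qed

lemma euler_derivation_is_derivation: "is_kser_derivation \<Delta> euler_derivation"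
  unfolding is_kser_derivation_def
  by (auto simp: euler_derivation_kser_mult) (auto simp: euler_derivation_def ser_on_def algebra_simps)

end

section \<open>The ring \<open>R[[s]]\<^sub>\<Delta>\<close>\<close>

definition hs_at :: "((nat \<Rightarrow> nat) \<Rightarrow> 'a::comm_ring_1 \<Rightarrow> 'a) \<Rightarrow> (nat \<Rightarrow> nat) \<Rightarrow> bool" where
  "hs_at D \<alpha> \<longleftrightarrow> (\<forall>x y. D \<alpha> (x * y) = (\<Sum>\<beta> | \<beta> \<le> \<alpha>. D \<beta> x * D (\<alpha> - \<beta>) y))"

locale series_setting = co_ideal_setting +
  fixes \<iota> :: "'k::comm_ring_1 \<Rightarrow> 'a::comm_ring_1"
  assumes ring_hom: "ring_hom_k \<iota>"
begin

lemma iota_add: "\<iota> (a + b) = \<iota> a + \<iota> b"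
  and iota_mult: "\<iota> (a * b) = \<iota> a * \<iota> b"
  and iota_one: "\<iota> 1 = 1"
  using ring_hom by (simp_all add: ring_hom_k_def)

lemma iota_zero: "\<iota> 0 = 0"
  using iota_add[of 0 0] by simp

lemma iota_of_nat: "\<iota> (of_nat n) = of_nat n"
  by (induction n) (simp_all add: iota_zero iota_add iota_one)

lemma End_add: "f \<in> End_k \<iota> \<Longrightarrow> f (x + y) = f x + f y"
  by (simp add: End_k_def)

lemma End_zero: "f \<in> End_k \<iota> \<Longrightarrow> f 0 = 0"
  using End_add[of f 0 0] by simp

lemma End_diff: "f \<in> End_k \<iota> \<Longrightarrow> f (x - y) = f x - f y"
  using End_add[of f "x - y" y] by (simp add: algebra_simps)

lemma End_sum: "f \<in> End_k \<iota> \<Longrightarrow> f (sum g S) = (\<Sum>i\<in>S. f (g i))"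
  using sum_comp_morphism[of f g S] End_zero End_add by (simp add: o_def)

lemma End_sumI: "(\<And>i. i \<in> S \<Longrightarrow> f i \<in> End_k \<iota>) \<Longrightarrow> (\<lambda>x. \<Sum>i\<in>S. f i x) \<in> End_k \<iota>"
  by (auto simp: End_k_def sum.distrib sum_distrib_left)

lemma End_comp: "f \<in> End_k \<iota> \<Longrightarrow> g \<in> End_k \<iota> \<Longrightarrow> (\<lambda>x. f (g x)) \<in> End_k \<iota>"
  by (simp add: End_k_def)

lemma End_scale: "f \<in> End_k \<iota> \<Longrightarrow> (\<lambda>x. c * f x) \<in> End_k \<iota>"
  by (simp add: End_k_def distrib_left mult.left_commute)

abbreviation End_series :: "((nat \<Rightarrow> nat) \<Rightarrow> 'a \<Rightarrow> 'a) set" where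
  "End_series \<equiv> ser_on \<Delta> (\<lambda>_. 0) (End_k \<iota>)"

lemma End_seriesI:
  "(\<And>\<alpha>. \<alpha> \<in> \<Delta> \<Longrightarrow> r \<alpha> \<in> End_k \<iota>) \<Longrightarrow> (\<And>\<alpha>. \<alpha> \<notin> \<Delta> \<Longrightarrow> r \<alpha> = (\<lambda>_. 0)) \<Longrightarrow> r \<in> End_series"
  by (simp add: ser_on_def)

lemma End_series_coeff: "r \<in> End_series \<Longrightarrow> \<alpha> \<in> \<Delta> \<Longrightarrow> r \<alpha> \<in> End_k \<iota>"
  by (simp add: ser_on_def)

lemma End_series_outside: "r \<in> End_series \<Longrightarrow> \<alpha> \<notin> \<Delta> \<Longrightarrow> r \<alpha> = (\<lambda>_. 0)"
  by (simp add: ser_on_def)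

lemma ser_mult_apply:
  "\<alpha> \<in> \<Delta> \<Longrightarrow> ser_mult \<Delta> r r' \<alpha> x = (\<Sum>\<beta> | \<beta> \<le> \<alpha>. r \<beta> (r' (\<alpha> - \<beta>) x))"
  by (simp add: ser_mult_def)

lemma ser_mult_outside: "\<alpha> \<notin> \<Delta> \<Longrightarrow> ser_mult \<Delta> r r' \<alpha> = (\<lambda>_. 0)"
  by (simp add: ser_mult_def)

lemma ser_mult_zero_index: "ser_mult \<Delta> r r' 0 x = r 0 (r' 0 x)"
  by (simp add: ser_mult_apply[OF zero_index_in])

lemma ser_mult_closed:
  assumes "r \<in> End_series" "r' \<in> End_series"
  shows "ser_mult \<Delta> r r' \<in> End_series"
proof (rule End_seriesI)
  fix \<alpha> assume \<alpha>: "\<alpha> \<in> \<Delta>"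
  have "(\<lambda>x. r \<beta> (r' (\<alpha> - \<beta>) x)) \<in> End_k \<iota>" if "\<beta> \<le> \<alpha>" for \<beta>
    using End_series_coeff[OF assms(1) down_closed[OF \<alpha> that]] End_series_coeff[OF assms(2) diff_in[OF \<alpha>]]
    by (rule End_comp)
  then show "ser_mult \<Delta> r r' \<alpha> \<in> End_k \<iota>"
    using End_sumI[of "{\<beta>. \<beta> \<le> \<alpha>}"] by (simp add: ser_mult_def \<alpha>)
qed (rule ser_mult_outside)

lemma ser_mult_assoc:
  assumes r: "r \<in> End_series"
  shows "ser_mult \<Delta> (ser_mult \<Delta> r r') r'' = ser_mult \<Delta> r (ser_mult \<Delta> r' r'')"
proof (intro ext)
  fix \<alpha> x
  show "ser_mult \<Delta> (ser_mult \<Delta> r r') r'' \<alpha> x = ser_mult \<Delta> r (ser_mult \<Delta> r' r'') \<alpha> x"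
  proof (cases "\<alpha> \<in> \<Delta>")
    case True
    have "ser_mult \<Delta> (ser_mult \<Delta> r r') r'' \<alpha> x
        = (\<Sum>\<beta> | \<beta> \<le> \<alpha>. \<Sum>\<mu> | \<mu> \<le> \<beta>. r \<mu> (r' (\<beta> - \<mu>) (r'' (\<alpha> - \<beta>) x)))"
      using True by (auto simp: ser_mult_apply down_closed intro!: sum.cong)
    also have "\<dots> = (\<Sum>\<mu> | \<mu> \<le> \<alpha>. \<Sum>\<nu> | \<nu> \<le> \<alpha> - \<mu>. r \<mu> (r' \<nu> (r'' (\<alpha> - \<mu> - \<nu>) x)))"
      by (rule sum_below_assoc[OF True])
    also have "\<dots> = ser_mult \<Delta> r (ser_mult \<Delta> r' r'') \<alpha> x"
      using True by (auto simp: ser_mult_apply diff_in End_sum[OF End_series_coeff[OF r]]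
          down_closed intro!: sum.cong)
    finally show ?thesis .
  qed (simp add: ser_mult_outside)
qed

lemma ser_one_apply: "ser_one \<Delta> \<alpha> = (if \<alpha> = 0 then id else (\<lambda>_. 0))"
  by (simp add: ser_one_def zero_fun_def)

lemma ser_one_in: "ser_one \<Delta> \<in> End_series"
  using zero_index_in by (auto simp: ser_on_def ser_one_apply End_k_def)

lemma ser_mult_one_left:
  assumes "\<And>\<alpha>. \<alpha> \<notin> \<Delta> \<Longrightarrow> r \<alpha> = (\<lambda>_. 0)"
  shows "ser_mult \<Delta> (ser_one \<Delta>) r = r"
proof (intro ext)
  fix \<alpha> x
  show "ser_mult \<Delta> (ser_one \<Delta>) r \<alpha> x = r \<alpha> x"
  proof (cases "\<alpha> \<in> \<Delta>")
    case True
    have "ser_mult \<Delta> (ser_one \<Delta>) r \<alpha> x = (\<Sum>\<beta> | \<beta> \<le> \<alpha>. if \<beta> = 0 then r (\<alpha> - \<beta>) x else 0)"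
      using True by (auto simp: ser_mult_apply ser_one_apply intro!: sum.cong)
    then show ?thesis
      using finite_below[OF True] by (simp add: sum.delta le_fun_def)
  qed (simp add: ser_mult_outside assms)
qed

lemma ser_mult_one_right:
  assumes r: "r \<in> End_series"
  shows "ser_mult \<Delta> r (ser_one \<Delta>) = r"
proof (intro ext)
  fix \<alpha> x
  show "ser_mult \<Delta> r (ser_one \<Delta>) \<alpha> x = r \<alpha> x"
  proof (cases "\<alpha> \<in> \<Delta>")
    case True
    have "ser_mult \<Delta> r (ser_one \<Delta>) \<alpha> x = (\<Sum>\<beta> | \<beta> \<le> \<alpha>. if \<beta> = \<alpha> then r \<beta> x else 0)"
      using True down_closed End_zero[OF End_series_coeff[OF r]]
      by (auto simp: ser_mult_apply ser_one_apply index_diff_eq_zero_iff intro!: sum.cong)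
    then show ?thesis
      using finite_below[OF True] by (simp add: sum.delta)
  qed (simp add: ser_mult_outside End_series_outside[OF r])
qed

lemma ser_mult_diff_right:
  assumes "q \<in> End_series"
  shows "ser_mult \<Delta> q (r - r') = ser_mult \<Delta> q r - ser_mult \<Delta> q r'"
proof (intro ext)
  fix \<alpha> x
  show "ser_mult \<Delta> q (r - r') \<alpha> x = (ser_mult \<Delta> q r - ser_mult \<Delta> q r') \<alpha> x"
    using assms down_closed
    by (cases "\<alpha> \<in> \<Delta>") (auto simp: ser_mult_apply ser_mult_outside End_diff End_series_coeff
        sum_subtractf intro!: sum.cong)
qed

definition ser_power :: "((nat \<Rightarrow> nat) \<Rightarrow> 'a \<Rightarrow> 'a) \<Rightarrow> nat \<Rightarrow> (nat \<Rightarrow> nat) \<Rightarrow> 'a \<Rightarrow> 'a" where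
  "ser_power r n = ((\<lambda>q. ser_mult \<Delta> q r) ^^ n) (ser_one \<Delta>)"

lemma ser_power_0 [simp]: "ser_power r 0 = ser_one \<Delta>"
  and ser_power_Suc [simp]: "ser_power r (Suc n) = ser_mult \<Delta> (ser_power r n) r"
  by (simp_all add: ser_power_def)

lemma ser_power_closed: "r \<in> End_series \<Longrightarrow> ser_power r n \<in> End_series"
  by (induction n) (simp_all add: ser_one_in ser_mult_closed)

lemma ser_power_vanishes:
  assumes r: "r \<in> End_series" "r 0 = (\<lambda>_. 0)"
  shows "\<alpha> \<in> \<Delta> \<Longrightarrow> mdeg p \<alpha> < n \<Longrightarrow> ser_power r n \<alpha> x = 0"
proof (induction n arbitrary: \<alpha> x)
  case (Suc n)
  have "ser_power r n \<beta> (r (\<alpha> - \<beta>) x) = 0" if "\<beta> \<le> \<alpha>" for \<beta>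
  proof (cases "\<beta> = \<alpha>")
    case True
    then show ?thesis
      using End_zero[OF End_series_coeff[OF ser_power_closed[OF r(1)] Suc.prems(1)]] r(2) by simp
  next
    case False
    then show ?thesis
      using Suc mdeg_less[OF Suc.prems(1) that] down_closed[OF Suc.prems(1) that] by simp
  qed
  then show ?case
    by (simp add: ser_mult_apply[OF Suc.prems(1)])
qed simp

text \<open>The left inverse is the Neumann series \<open>\<Sum>\<^sub>n (1 - r)\<^sup>n\<close>, which is finite in each
  coefficient because \<open>(1 - r)\<^sup>n\<close> vanishes in degrees below \<open>n\<close>.\<close>
lemma ser_left_inverse_exists:
  assumes r: "r \<in> End_series" "r 0 = id"
  shows "\<exists>r' \<in> End_series. ser_mult \<Delta> r' r = ser_one \<Delta>"
proof -
  define Y where "Y = ser_one \<Delta> - r"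
  have Y: "Y \<in> End_series" "Y 0 = (\<lambda>_. 0)"
    using r ser_one_in zero_index_in
    by (auto simp: Y_def ser_one_apply End_k_def ser_on_def fun_eq_iff right_diff_distrib)
  have r_eq: "r = ser_one \<Delta> - Y"
    by (simp add: Y_def)
  have step: "ser_mult \<Delta> (ser_power Y n) r = ser_power Y n - ser_power Y (Suc n)" for n
    by (simp add: r_eq ser_mult_diff_right ser_power_closed[OF Y(1)] ser_mult_one_right)
  define E where "E \<alpha> x = (\<Sum>n\<le>mdeg p \<alpha>. ser_power Y n \<alpha> x)" for \<alpha> x
  have E: "E \<in> End_series"
    using End_series_coeff[OF ser_power_closed[OF Y(1)]] End_series_outside[OF ser_power_closed[OF Y(1)]]
    by (intro End_seriesI) (simp_all add: E_def[abs_def] End_sumI)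
  have "ser_mult \<Delta> E r \<alpha> x = ser_one \<Delta> \<alpha> x" if \<alpha>: "\<alpha> \<in> \<Delta>" for \<alpha> x
  proof -
    have "ser_mult \<Delta> E r \<alpha> x = (\<Sum>\<beta> | \<beta> \<le> \<alpha>. E \<beta> (r (\<alpha> - \<beta>) x))"
      by (rule ser_mult_apply[OF \<alpha>])
    also have "\<dots> = (\<Sum>\<beta> | \<beta> \<le> \<alpha>. \<Sum>n\<le>mdeg p \<alpha>. ser_power Y n \<beta> (r (\<alpha> - \<beta>) x))"
    proof (intro sum.cong refl)
      fix \<beta> assume "\<beta> \<in> {\<beta>. \<beta> \<le> \<alpha>}"
      then have "\<beta> \<in> \<Delta>" "mdeg p \<beta> \<le> mdeg p \<alpha>"
        using down_closed[OF \<alpha>] mdeg_diff[of \<beta> \<alpha> p] by auto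
      then show "E \<beta> (r (\<alpha> - \<beta>) x) = (\<Sum>n\<le>mdeg p \<alpha>. ser_power Y n \<beta> (r (\<alpha> - \<beta>) x))"
        unfolding E_def by (intro sum.mono_neutral_left) (auto simp: ser_power_vanishes[OF Y])
    qed
    also have "\<dots> = (\<Sum>n<Suc (mdeg p \<alpha>). ser_power Y n \<alpha> x - ser_power Y (Suc n) \<alpha> x)"
      by (subst sum.swap) (simp add: ser_mult_apply[OF \<alpha>, symmetric] step lessThan_Suc_atMost)
    also have "\<dots> = ser_power Y 0 \<alpha> x - ser_power Y (Suc (mdeg p \<alpha>)) \<alpha> x"
      by (rule sum_lessThan_telescope')
    also have "\<dots> = ser_one \<Delta> \<alpha> x"
      using ser_power_vanishes[OF Y \<alpha>, of "Suc (mdeg p \<alpha>)"] by simp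
    finally show ?thesis .
  qed
  then have "ser_mult \<Delta> E r = ser_one \<Delta>"
    using ser_mult_outside End_series_outside[OF ser_one_in] by (metis ext)
  then show ?thesis
    using E by blast
qed

lemma
  assumes "D \<in> U_group \<iota> \<Delta>"
  shows ser_inv_closed: "ser_inv \<iota> \<Delta> D \<in> End_series"
    and ser_inv_right: "ser_mult \<Delta> D (ser_inv \<iota> \<Delta> D) = ser_one \<Delta>"
proof -
  have D: "D \<in> End_series" "D 0 = id"
    using assms by (simp_all add: U_group_def zero_fun_def)
  obtain E where E: "E \<in> End_series" "ser_mult \<Delta> E D = ser_one \<Delta>"
    using ser_left_inverse_exists[OF D] by blast
  txt \<open>\<open>E\<close> has a left inverse \<open>F\<close> too, and \<open>F = F E D = D\<close>; so \<open>E\<close> is a two-sided inverse.\<close>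
  have "E 0 = id"
    using ser_mult_zero_index[of E D] E(2) D(2) by (auto simp: ser_one_apply fun_eq_iff)
  then obtain F where F: "F \<in> End_series" "ser_mult \<Delta> F E = ser_one \<Delta>"
    using ser_left_inverse_exists[OF E(1)] by blast
  have "F = ser_mult \<Delta> (ser_mult \<Delta> F E) D"
    using ser_mult_one_right[OF F(1)] E(2) ser_mult_assoc[OF F(1)] by simp
  also have "\<dots> = D"
    using F(2) ser_mult_one_left[OF End_series_outside[OF D(1)]] by simp
  finally have right: "ser_mult \<Delta> D E = ser_one \<Delta>"
    using F(2) by simp
  have "E' = E" if "E' \<in> End_series \<and> ser_mult \<Delta> E' D = ser_one \<Delta>" for E'
  proof -
    have "E' = ser_mult \<Delta> E' (ser_mult \<Delta> D E)"
      using ser_mult_one_right[of E'] that right by simp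
    also have "\<dots> = ser_mult \<Delta> (ser_mult \<Delta> E' D) E"
      using ser_mult_assoc that by metis
    also have "\<dots> = E"
      using that ser_mult_one_left[OF End_series_outside[OF E(1)]] by simp
    finally show ?thesis .
  qed
  then have "ser_inv \<iota> \<Delta> D = E"
    unfolding ser_inv_def using E by blast
  then show "ser_inv \<iota> \<Delta> D \<in> End_series" "ser_mult \<Delta> D (ser_inv \<iota> \<Delta> D) = ser_one \<Delta>"
    using E right by simp_all
qed

lemma ser_mult_inv_cancel_left:
  assumes "D \<in> U_group \<iota> \<Delta>" "\<And>\<alpha>. \<alpha> \<notin> \<Delta> \<Longrightarrow> M \<alpha> = (\<lambda>_. 0)"
  shows "ser_mult \<Delta> D (ser_mult \<Delta> (ser_inv \<iota> \<Delta> D) M) = M"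
proof -
  have "D \<in> End_series"
    using assms(1) by (simp add: U_group_def)
  then show ?thesis
    using ser_mult_assoc ser_inv_right[OF assms(1)] ser_mult_one_left assms(2) by metis
qed

section \<open>Hasse--Schmidt derivations and logarithmic derivatives\<close>

text \<open>Only the summand \<open>\<beta> = \<alpha>\<close> uses the Hasse--Schmidt identity in degree \<open>\<alpha>\<close>, and it
  vanishes when \<open>e\<^sub>0 = 0\<close>.\<close>
lemma ser_mult_leibniz:
  assumes \<alpha>: "\<alpha> \<in> \<Delta>" and D: "D \<in> End_series"
    and below: "\<And>\<beta>. \<beta> \<le> \<alpha> \<Longrightarrow> \<beta> \<noteq> \<alpha> \<Longrightarrow> hs_at D \<beta>"
    and top: "hs_at D \<alpha> \<or> e 0 = (\<lambda>_. 0)"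
  shows "(\<Sum>\<beta> | \<beta> \<le> \<alpha>. D \<beta> (x * e (\<alpha> - \<beta>) y + e (\<alpha> - \<beta>) x * y))
       = (\<Sum>\<mu> | \<mu> \<le> \<alpha>. D \<mu> x * ser_mult \<Delta> D e (\<alpha> - \<mu>) y + ser_mult \<Delta> D e \<mu> x * D (\<alpha> - \<mu>) y)"
proof -
  have expand: "D \<beta> (x * e (\<alpha> - \<beta>) y + e (\<alpha> - \<beta>) x * y)
      = (\<Sum>\<mu> | \<mu> \<le> \<beta>. D \<mu> x * D (\<beta> - \<mu>) (e (\<alpha> - \<beta>) y))
      + (\<Sum>\<mu> | \<mu> \<le> \<beta>. D (\<beta> - \<mu>) (e (\<alpha> - \<beta>) x) * D \<mu> y)" if \<beta>: "\<beta> \<le> \<alpha>" for \<beta>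
  proof (cases "hs_at D \<beta>")
    case True
    then show ?thesis
      using End_add[OF End_series_coeff[OF D down_closed[OF \<alpha> \<beta>]]]
        sum_below_reflect[OF down_closed[OF \<alpha> \<beta>], of "\<lambda>\<mu> \<nu>. D \<mu> (e (\<alpha> - \<beta>) x) * D \<nu> y"]
      by (simp add: hs_at_def)
  next
    case False
    then have "\<beta> = \<alpha>" "e 0 = (\<lambda>_. 0)"
      using below[OF \<beta>] top by auto
    then show ?thesis
      using End_zero[OF End_series_coeff[OF D]] \<alpha> down_closed diff_in by simp
  qed
  have "(\<Sum>\<beta> | \<beta> \<le> \<alpha>. \<Sum>\<mu> | \<mu> \<le> \<beta>. D \<mu> x * D (\<beta> - \<mu>) (e (\<alpha> - \<beta>) y))
      = (\<Sum>\<mu> | \<mu> \<le> \<alpha>. \<Sum>\<nu> | \<nu> \<le> \<alpha> - \<mu>. D \<mu> x * D \<nu> (e (\<alpha> - \<mu> - \<nu>) y))"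
    by (rule sum_below_assoc[OF \<alpha>])
  also have "\<dots> = (\<Sum>\<mu> | \<mu> \<le> \<alpha>. D \<mu> x * ser_mult \<Delta> D e (\<alpha> - \<mu>) y)"
    by (simp add: ser_mult_apply[OF diff_in[OF \<alpha>]] sum_distrib_left)
  moreover have "(\<Sum>\<beta> | \<beta> \<le> \<alpha>. \<Sum>\<mu> | \<mu> \<le> \<beta>. D (\<beta> - \<mu>) (e (\<alpha> - \<beta>) x) * D \<mu> y)
      = (\<Sum>\<mu> | \<mu> \<le> \<alpha>. \<Sum>\<nu> | \<nu> \<le> \<alpha> - \<mu>. D \<nu> (e (\<alpha> - \<mu> - \<nu>) x) * D \<mu> y)"
    by (rule sum_below_assoc[OF \<alpha>])
  moreover have "\<dots> = (\<Sum>\<mu> | \<mu> \<le> \<alpha>. ser_mult \<Delta> D e (\<alpha> - \<mu>) x * D \<mu> y)"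
    by (simp add: ser_mult_apply[OF diff_in[OF \<alpha>]] sum_distrib_right)
  moreover have "\<dots> = (\<Sum>\<mu> | \<mu> \<le> \<alpha>. ser_mult \<Delta> D e \<mu> x * D (\<alpha> - \<mu>) y)"
    by (rule sum_below_reflect[OF \<alpha>, symmetric])
  ultimately show ?thesis
    by (simp add: expand sum.distrib)
qed

lemma unitriangular_eq_zero:
  assumes D: "D \<in> End_series" "D 0 = id"
    and eq: "\<And>\<gamma>. \<gamma> \<in> \<Delta> \<Longrightarrow> (\<Sum>\<beta> | \<beta> \<le> \<gamma>. D \<beta> (u (\<gamma> - \<beta>))) = 0"
  shows "\<gamma> \<in> \<Delta> \<Longrightarrow> u \<gamma> = 0"
proof (induction "mdeg p \<gamma>" arbitrary: \<gamma> rule: less_induct)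
  case less
  have "D \<beta> (u (\<gamma> - \<beta>)) = 0" if "\<beta> \<in> {\<beta>. \<beta> \<le> \<gamma>} - {0}" for \<beta>
    using that less mdeg_diff_less diff_in End_zero[OF End_series_coeff[OF D(1) down_closed]] by auto
  then have "(\<Sum>\<beta> \<in> {\<beta>. \<beta> \<le> \<gamma>} - {0}. D \<beta> (u (\<gamma> - \<beta>))) = 0"
    by (rule sum.neutral[OF ballI])
  moreover have "(\<Sum>\<beta> | \<beta> \<le> \<gamma>. D \<beta> (u (\<gamma> - \<beta>)))
      = D 0 (u (\<gamma> - 0)) + (\<Sum>\<beta> \<in> {\<beta>. \<beta> \<le> \<gamma>} - {0}. D \<beta> (u (\<gamma> - \<beta>)))"
    by (rule sum.remove[OF finite_below[OF less.prems]]) (simp add: le_fun_def)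
  ultimately show ?case
    using eq[OF less.prems] D(2) by simp
qed

lemma dR_closed:
  assumes D: "D \<in> End_series" and d: "is_kser_derivation \<Delta> d"
  shows "dR \<iota> \<Delta> d D \<in> End_series"
proof (rule End_seriesI)
  fix \<gamma> assume "\<gamma> \<notin> \<Delta>"
  then have no_support: "{\<alpha> \<in> \<Delta>. d (kmono \<alpha>) \<gamma> \<noteq> 0} = {}"
    using derivation_kmono_outside[OF d] by auto
  show "dR \<iota> \<Delta> d D \<gamma> = (\<lambda>_. 0)"
    unfolding dR_def no_support by simp
qed (unfold dR_def, intro End_sumI End_scale End_series_coeff[OF D], simp)

lemma dR_eq_sum_deg_le:
  assumes d: "is_kser_derivation \<Delta> d" and "mdeg p \<gamma> \<le> n"
  shows "dR \<iota> \<Delta> d D \<gamma> x = (\<Sum>\<alpha> \<in> deg_le (n + 1). \<iota> (d (kmono \<alpha>) \<gamma>) * D \<alpha> x)"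
  unfolding dR_def
proof (rule sum.mono_neutral_left[OF finite_deg_le])
  show "{\<alpha> \<in> \<Delta>. d (kmono \<alpha>) \<gamma> \<noteq> 0} \<subseteq> deg_le (n + 1)"
    using derivation_kmono_degree[OF d] assms(2) by (fastforce simp: deg_le_def)
qed (auto simp: iota_zero deg_le_def)

lemma sum_below_mult_dR:
  assumes d: "is_kser_derivation \<Delta> d" and \<gamma>: "\<gamma> \<in> \<Delta>"
  defines "T \<equiv> deg_le (mdeg p \<gamma> + 1)"
  shows "(\<Sum>\<beta> | \<beta> \<le> \<gamma>. D \<beta> x * dR \<iota> \<Delta> d D (\<gamma> - \<beta>) y)
       = (\<Sum>\<beta>\<in>T. \<Sum>\<mu>\<in>T. \<iota> (if \<beta> \<le> \<gamma> then d (kmono \<mu>) (\<gamma> - \<beta>) else 0) * (D \<beta> x * D \<mu> y))"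
proof -
  have below_T: "{\<beta>. \<beta> \<le> \<gamma>} \<subseteq> T"
    unfolding T_def deg_le_def using down_closed[OF \<gamma>] mdeg_diff by fastforce
  have "D \<beta> x * dR \<iota> \<Delta> d D (\<gamma> - \<beta>) y = (\<Sum>\<mu>\<in>T. \<iota> (d (kmono \<mu>) (\<gamma> - \<beta>)) * (D \<beta> x * D \<mu> y))"
    if "\<beta> \<le> \<gamma>" for \<beta>
    using mdeg_diff[OF that, of p]
    by (simp add: T_def dR_eq_sum_deg_le[OF d, of _ "mdeg p \<gamma>"] sum_distrib_left mult.left_commute)
  then have "(\<Sum>\<beta> | \<beta> \<le> \<gamma>. D \<beta> x * dR \<iota> \<Delta> d D (\<gamma> - \<beta>) y)
      = (\<Sum>\<beta> | \<beta> \<le> \<gamma>. \<Sum>\<mu>\<in>T. \<iota> (d (kmono \<mu>) (\<gamma> - \<beta>)) * (D \<beta> x * D \<mu> y))"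
    by simp
  also have "\<dots> = (\<Sum>\<beta>\<in>T. \<Sum>\<mu>\<in>T. \<iota> (if \<beta> \<le> \<gamma> then d (kmono \<mu>) (\<gamma> - \<beta>) else 0) * (D \<beta> x * D \<mu> y))"
    using below_T by (intro sum.mono_neutral_cong_left) (auto simp: T_def finite_deg_le iota_zero)
  finally show ?thesis .
qed

lemma sum_below_dR_mult:
  assumes d: "is_kser_derivation \<Delta> d" and \<gamma>: "\<gamma> \<in> \<Delta>"
  defines "T \<equiv> deg_le (mdeg p \<gamma> + 1)"
  shows "(\<Sum>\<beta> | \<beta> \<le> \<gamma>. dR \<iota> \<Delta> d D \<beta> x * D (\<gamma> - \<beta>) y)
       = (\<Sum>\<beta>\<in>T. \<Sum>\<mu>\<in>T. \<iota> (if \<mu> \<le> \<gamma> then d (kmono \<beta>) (\<gamma> - \<mu>) else 0) * (D \<beta> x * D \<mu> y))"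
proof -
  have "(\<Sum>\<beta> | \<beta> \<le> \<gamma>. dR \<iota> \<Delta> d D \<beta> x * D (\<gamma> - \<beta>) y)
      = (\<Sum>\<beta> | \<beta> \<le> \<gamma>. D \<beta> y * dR \<iota> \<Delta> d D (\<gamma> - \<beta>) x)"
    by (subst sum_below_reflect[OF \<gamma>]) (simp add: mult.commute)
  also have "\<dots> = (\<Sum>\<beta>\<in>T. \<Sum>\<mu>\<in>T. \<iota> (if \<beta> \<le> \<gamma> then d (kmono \<mu>) (\<gamma> - \<beta>) else 0) * (D \<beta> y * D \<mu> x))"
    unfolding T_def by (rule sum_below_mult_dR[OF d \<gamma>])
  also have "\<dots> = (\<Sum>\<mu>\<in>T. \<Sum>\<beta>\<in>T. \<iota> (if \<beta> \<le> \<gamma> then d (kmono \<mu>) (\<gamma> - \<beta>) else 0) * (D \<beta> y * D \<mu> x))"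
    by (rule sum.swap)
  finally show ?thesis
    by (simp add: mult.commute)
qed

lemma iota_derivation_kmono_add:
  assumes d: "is_kser_derivation \<Delta> d" and "\<beta> \<in> \<Delta>" "\<mu> \<in> \<Delta>" "\<gamma> \<in> \<Delta>"
  shows "(if \<beta> + \<mu> \<in> deg_le (mdeg p \<gamma> + 1) then \<iota> (d (kmono (\<beta> + \<mu>)) \<gamma>) else 0)
       = \<iota> (if \<beta> \<le> \<gamma> then d (kmono \<mu>) (\<gamma> - \<beta>) else 0)
         + \<iota> (if \<mu> \<le> \<gamma> then d (kmono \<beta>) (\<gamma> - \<mu>) else 0)"
proof -
  have "(if \<beta> + \<mu> \<in> deg_le (mdeg p \<gamma> + 1) then d (kmono (\<beta> + \<mu>)) \<gamma> else 0)
      = (if \<beta> + \<mu> \<in> \<Delta> then d (kmono (\<beta> + \<mu>)) \<gamma> else 0)"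
    using derivation_kmono_degree[OF d, of "\<beta> + \<mu>" \<gamma>] by (auto simp: deg_le_def)
  also have "\<dots> = (if \<beta> \<le> \<gamma> then d (kmono \<mu>) (\<gamma> - \<beta>) else 0) + (if \<mu> \<le> \<gamma> then d (kmono \<beta>) (\<gamma> - \<mu>) else 0)"
    by (rule derivation_kmono_add[OF d assms(2-4)])
  finally have "\<iota> (if \<beta> + \<mu> \<in> deg_le (mdeg p \<gamma> + 1) then d (kmono (\<beta> + \<mu>)) \<gamma> else 0)
      = \<iota> (if \<beta> \<le> \<gamma> then d (kmono \<mu>) (\<gamma> - \<beta>) else 0) + \<iota> (if \<mu> \<le> \<gamma> then d (kmono \<beta>) (\<gamma> - \<mu>) else 0)"
    by (simp only: iota_add)
  then show ?thesis
    by (simp only: if_distrib[of \<iota>] iota_zero)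
qed

lemma dR_twisted_leibniz:
  assumes d: "is_kser_derivation \<Delta> d" and D: "D \<in> HS \<iota> \<Delta>" and \<gamma>: "\<gamma> \<in> \<Delta>"
  shows "dR \<iota> \<Delta> d D \<gamma> (x * y)
    = (\<Sum>\<beta> | \<beta> \<le> \<gamma>. D \<beta> x * dR \<iota> \<Delta> d D (\<gamma> - \<beta>) y + dR \<iota> \<Delta> d D \<beta> x * D (\<gamma> - \<beta>) y)"
proof -
  define T where "T = deg_le (mdeg p \<gamma> + 1)"
  have T: "finite T" "T \<subseteq> \<Delta>" "\<And>\<alpha> \<beta>. \<alpha> \<in> T \<Longrightarrow> \<beta> \<le> \<alpha> \<Longrightarrow> \<beta> \<in> T"
    unfolding T_def using finite_deg_le down_closed mdeg_diff by (fastforce simp: deg_le_def)+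
  have hs: "\<alpha> \<in> \<Delta> \<Longrightarrow> D \<alpha> (x * y) = (\<Sum>\<beta> | \<beta> \<le> \<alpha>. D \<beta> x * D (\<alpha> - \<beta>) y)" for \<alpha>
    using D by (simp add: HS_def)
  have "dR \<iota> \<Delta> d D \<gamma> (x * y) = (\<Sum>\<alpha>\<in>T. \<Sum>\<beta> | \<beta> \<le> \<alpha>. \<iota> (d (kmono \<alpha>) \<gamma>) * (D \<beta> x * D (\<alpha> - \<beta>) y))"
    using T(2) by (simp add: T_def dR_eq_sum_deg_le[OF d order.refl] hs sum_distrib_left subset_iff)
  also have "\<dots> = (\<Sum>\<beta>\<in>T. \<Sum>\<mu>\<in>T.
      if \<beta> + \<mu> \<in> T then \<iota> (d (kmono (\<beta> + \<mu>)) \<gamma>) * (D \<beta> x * D (\<beta> + \<mu> - \<beta>) y) else 0)"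
    by (rule sum_below_pairs[OF T(1,3)])
  also have "\<dots> = (\<Sum>\<beta>\<in>T. \<Sum>\<mu>\<in>T.
      (if \<beta> + \<mu> \<in> T then \<iota> (d (kmono (\<beta> + \<mu>)) \<gamma>) else 0) * (D \<beta> x * D \<mu> y))"
    by (intro sum.cong refl) simp
  also have "\<dots> = (\<Sum>\<beta>\<in>T. \<Sum>\<mu>\<in>T. \<iota> (if \<beta> \<le> \<gamma> then d (kmono \<mu>) (\<gamma> - \<beta>) else 0) * (D \<beta> x * D \<mu> y))
      + (\<Sum>\<beta>\<in>T. \<Sum>\<mu>\<in>T. \<iota> (if \<mu> \<le> \<gamma> then d (kmono \<beta>) (\<gamma> - \<mu>) else 0) * (D \<beta> x * D \<mu> y))"
    using iota_derivation_kmono_add[OF d _ _ \<gamma>, folded T_def] T(2)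
    by (simp add: subset_iff distrib_right sum.distrib cong: sum.cong)
  also have "\<dots> = (\<Sum>\<beta> | \<beta> \<le> \<gamma>. D \<beta> x * dR \<iota> \<Delta> d D (\<gamma> - \<beta>) y + dR \<iota> \<Delta> d D \<beta> x * D (\<gamma> - \<beta>) y)"
    unfolding T_def sum_below_mult_dR[OF d \<gamma>, symmetric] sum_below_dR_mult[OF d \<gamma>, symmetric]
    by (rule sum.distrib[symmetric])
  finally show ?thesis .
qed

lemma dR_euler_derivation:
  assumes D: "D \<in> End_series"
  shows "dR \<iota> \<Delta> euler_derivation D = (\<lambda>\<alpha> x. of_nat (mdeg p \<alpha>) * D \<alpha> x)"
proof (intro ext)
  fix \<gamma> x
  have support: "{\<alpha> \<in> \<Delta>. euler_derivation (kmono \<alpha>) \<gamma> \<noteq> (0 :: 'k)}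
      = (if \<gamma> \<in> \<Delta> \<and> of_nat (mdeg p \<gamma>) \<noteq> (0 :: 'k) then {\<gamma>} else {})"
    by (auto simp: euler_derivation_def kmono_def)
  have "(of_nat (mdeg p \<gamma>) :: 'a) = \<iota> (of_nat (mdeg p \<gamma>))"
    by (simp add: iota_of_nat)
  then show "dR \<iota> \<Delta> euler_derivation D \<gamma> x = of_nat (mdeg p \<gamma>) * D \<gamma> x"
    unfolding dR_def support
    using End_series_outside[OF D, of \<gamma>] iota_zero
    by (auto simp: euler_derivation_def kmono_def)
qed

lemma Der_seriesI:
  assumes "e \<in> End_series" "\<And>\<alpha> x y. \<alpha> \<in> \<Delta> \<Longrightarrow> e \<alpha> (x * y) = x * e \<alpha> y + e \<alpha> x * y"
  shows "e \<in> ser_on \<Delta> (\<lambda>_. 0) (Der_k \<iota>)"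
  using assms by (simp add: ser_on_def Der_k_def)

lemma Der_series_leibniz:
  "e \<in> ser_on \<Delta> (\<lambda>_. 0) (Der_k \<iota>) \<Longrightarrow> \<alpha> \<in> \<Delta> \<Longrightarrow> e \<alpha> (x * y) = x * e \<alpha> y + e \<alpha> x * y"
  by (simp add: ser_on_def Der_k_def)

lemma HS_imp_eps_d_Der:
  assumes D: "D \<in> HS \<iota> \<Delta>" and d: "is_kser_derivation \<Delta> d"
  shows "eps_d \<iota> \<Delta> d D \<in> ser_on \<Delta> (\<lambda>_. 0) (Der_k \<iota>)"
proof -
  have D_series: "D \<in> End_series" and D0: "D 0 = id" and hs: "\<And>\<alpha>. \<alpha> \<in> \<Delta> \<Longrightarrow> hs_at D \<alpha>"
    using D by (simp_all add: HS_def hs_at_def zero_fun_def)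
  have U: "D \<in> U_group \<iota> \<Delta>"
    using D by (simp add: HS_def U_group_def)
  define M where "M = dR \<iota> \<Delta> d D"
  define e where "e = eps_d \<iota> \<Delta> d D"
  have M: "M \<in> End_series"
    unfolding M_def by (rule dR_closed[OF D_series d])
  have e: "e \<in> End_series"
    unfolding e_def eps_d_def by (rule ser_mult_closed[OF ser_inv_closed[OF U] dR_closed[OF D_series d]])
  have De: "ser_mult \<Delta> D e = M"
    unfolding e_def eps_d_def M_def
    by (rule ser_mult_inv_cancel_left[OF U End_series_outside[OF dR_closed[OF D_series d]]])
  have "e \<alpha> (x * y) - (x * e \<alpha> y + e \<alpha> x * y) = 0" if \<alpha>: "\<alpha> \<in> \<Delta>" for \<alpha> x y
  proof (rule unitriangular_eq_zero[OF D_series D0 _ \<alpha>])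
    fix \<gamma> assume \<gamma>: "\<gamma> \<in> \<Delta>"
    have "(\<Sum>\<beta> | \<beta> \<le> \<gamma>. D \<beta> (e (\<gamma> - \<beta>) (x * y) - (x * e (\<gamma> - \<beta>) y + e (\<gamma> - \<beta>) x * y)))
        = (\<Sum>\<beta> | \<beta> \<le> \<gamma>. D \<beta> (e (\<gamma> - \<beta>) (x * y)))
          - (\<Sum>\<beta> | \<beta> \<le> \<gamma>. D \<beta> (x * e (\<gamma> - \<beta>) y + e (\<gamma> - \<beta>) x * y))"
      using End_diff[OF End_series_coeff[OF D_series down_closed[OF \<gamma>]]] by (simp add: sum_subtractf)
    also have "(\<Sum>\<beta> | \<beta> \<le> \<gamma>. D \<beta> (e (\<gamma> - \<beta>) (x * y))) = M \<gamma> (x * y)"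
      using ser_mult_apply[OF \<gamma>, of D e] De by simp
    also have "(\<Sum>\<beta> | \<beta> \<le> \<gamma>. D \<beta> (x * e (\<gamma> - \<beta>) y + e (\<gamma> - \<beta>) x * y))
        = (\<Sum>\<mu> | \<mu> \<le> \<gamma>. D \<mu> x * M (\<gamma> - \<mu>) y + M \<mu> x * D (\<gamma> - \<mu>) y)"
      unfolding De[symmetric]
      by (rule ser_mult_leibniz[OF \<gamma> D_series]) (auto intro: hs down_closed[OF \<gamma>] simp: hs \<gamma>)
    also have "\<dots> = M \<gamma> (x * y)"
      unfolding M_def by (rule dR_twisted_leibniz[OF d D \<gamma>, symmetric])
    finally show "(\<Sum>\<beta> | \<beta> \<le> \<gamma>. D \<beta> (e (\<gamma> - \<beta>) (x * y) - (x * e (\<gamma> - \<beta>) y + e (\<gamma> - \<beta>) x * y))) = 0"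
      by (simp add: fun_diff_def)
  qed
  then show ?thesis
    unfolding e_def[symmetric] by (intro Der_seriesI[OF e]) simp
qed

lemma eps_d_euler: "D \<in> End_series \<Longrightarrow> eps_d \<iota> \<Delta> euler_derivation D = eps \<iota> p \<Delta> D"
  by (simp add: eps_d_def eps_def dR_euler_derivation)

lemma of_nat_mult_cancel:
  assumes "Q_subring TYPE('k)" "0 < n" "(of_nat n :: 'a) * a = of_nat n * b"
  shows "a = b"
proof -
  obtain w :: 'k where "of_nat n * w = 1"
    using assms(1,2) by (auto simp: Q_subring_def)
  then have "\<iota> (of_nat n * w) = 1"
    by (simp add: iota_one)
  then have w: "(of_nat n :: 'a) * \<iota> w = 1"
    by (simp add: iota_mult iota_of_nat)
  have "a = \<iota> w * (of_nat n * a)"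
    using w by (simp add: mult.assoc[symmetric] mult.commute[of "\<iota> w"])
  also have "\<dots> = b"
    using w by (simp add: assms(3) mult.assoc[symmetric] mult.commute[of "\<iota> w"])
  finally show ?thesis .
qed

lemma hs_at_scaled:
  assumes \<alpha>: "\<alpha> \<in> \<Delta>" and D: "D \<in> End_series"
    and De: "ser_mult \<Delta> D e = (\<lambda>\<alpha> x. of_nat (mdeg p \<alpha>) * D \<alpha> x)"
    and e_leibniz: "\<And>\<gamma> x y. \<gamma> \<in> \<Delta> \<Longrightarrow> e \<gamma> (x * y) = x * e \<gamma> y + e \<gamma> x * y"
    and e0: "e 0 = (\<lambda>_. 0)"
    and below: "\<And>\<beta>. \<beta> \<le> \<alpha> \<Longrightarrow> \<beta> \<noteq> \<alpha> \<Longrightarrow> hs_at D \<beta>"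
  shows "of_nat (mdeg p \<alpha>) * D \<alpha> (x * y) = of_nat (mdeg p \<alpha>) * (\<Sum>\<beta> | \<beta> \<le> \<alpha>. D \<beta> x * D (\<alpha> - \<beta>) y)"
proof -
  have "of_nat (mdeg p \<alpha>) * D \<alpha> (x * y) = (\<Sum>\<beta> | \<beta> \<le> \<alpha>. D \<beta> (e (\<alpha> - \<beta>) (x * y)))"
    using ser_mult_apply[OF \<alpha>, of D e] by (simp add: De)
  also have "\<dots> = (\<Sum>\<beta> | \<beta> \<le> \<alpha>. D \<beta> (x * e (\<alpha> - \<beta>) y + e (\<alpha> - \<beta>) x * y))"
    using e_leibniz[OF diff_in[OF \<alpha>]] by simp
  also have "\<dots> = (\<Sum>\<mu> | \<mu> \<le> \<alpha>. D \<mu> x * ser_mult \<Delta> D e (\<alpha> - \<mu>) y + ser_mult \<Delta> D e \<mu> x * D (\<alpha> - \<mu>) y)"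
    using below e0 by (intro ser_mult_leibniz[OF \<alpha> D]) blast+
  also have "\<dots> = (\<Sum>\<mu> | \<mu> \<le> \<alpha>. of_nat (mdeg p \<alpha>) * (D \<mu> x * D (\<alpha> - \<mu>) y))"
    by (intro sum.cong refl) (simp add: De mdeg_diff[of _ \<alpha> p] algebra_simps)
  finally show ?thesis
    by (simp add: sum_distrib_left)
qed

lemma eps_Der_imp_HS:
  assumes Q: "Q_subring TYPE('k)" and U: "D \<in> U_group \<iota> \<Delta>"
    and e_Der: "eps \<iota> p \<Delta> D \<in> ser_on \<Delta> (\<lambda>_. 0) (Der_k \<iota>)"
  shows "D \<in> HS \<iota> \<Delta>"
proof -
  have D: "D \<in> End_series" and D0: "D 0 = id"
    using U by (simp_all add: U_group_def zero_fun_def)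
  have De: "ser_mult \<Delta> D (eps \<iota> p \<Delta> D) = (\<lambda>\<alpha> x. of_nat (mdeg p \<alpha>) * D \<alpha> x)"
    unfolding eps_def by (rule ser_mult_inv_cancel_left[OF U]) (simp add: End_series_outside[OF D])
  have e0: "eps \<iota> p \<Delta> D 0 = (\<lambda>_. 0)"
    using End_zero[OF End_series_coeff[OF ser_inv_closed[OF U] zero_index_in]]
    by (simp add: eps_def ser_mult_zero_index fun_eq_iff)
  have "hs_at D \<alpha>" if "\<alpha> \<in> \<Delta>" for \<alpha>
    using that
  proof (induction "mdeg p \<alpha>" arbitrary: \<alpha> rule: less_induct)
    case less
    show ?case
    proof (cases "\<alpha> = 0")
      case False
      have "hs_at D \<beta>" if "\<beta> \<le> \<alpha>" "\<beta> \<noteq> \<alpha>" for \<beta>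
        using less.hyps[OF mdeg_less[OF less.prems that]] down_closed[OF less.prems that(1)] .
      then show ?thesis
        using hs_at_scaled[OF less.prems D De Der_series_leibniz[OF e_Der] e0]
          of_nat_mult_cancel[OF Q mdeg_pos[OF less.prems False]]
        by (simp add: hs_at_def)
    qed (simp add: D0 hs_at_def)
  qed
  then show ?thesis
    using D D0 by (simp add: HS_def hs_at_def zero_fun_def)
qed

end

theorem mainTheorem13:
  fixes \<iota> :: "'k::comm_ring_1 \<Rightarrow> 'a::comm_ring_1"
    and p :: nat and \<Delta> :: "(nat \<Rightarrow> nat) set"
    and D :: "(nat \<Rightarrow> nat) \<Rightarrow> 'a \<Rightarrow> 'a"
  assumes "Q_subring TYPE('k)"
    and "ring_hom_k \<iota>"
    and "co_ideal p \<Delta>"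
    and "D \<in> U_group \<iota> \<Delta>"
  shows "(D \<in> HS \<iota> \<Delta> \<longleftrightarrow>
           (\<forall>d. is_kser_derivation \<Delta> d \<longrightarrow> eps_d \<iota> \<Delta> d D \<in> ser_on \<Delta> (\<lambda>_. 0) (Der_k \<iota>)))
       \<and> ((\<forall>d. is_kser_derivation \<Delta> d \<longrightarrow> eps_d \<iota> \<Delta> d D \<in> ser_on \<Delta> (\<lambda>_. 0) (Der_k \<iota>))
           \<longleftrightarrow> eps \<iota> p \<Delta> D \<in> ser_on \<Delta> (\<lambda>_. 0) (Der_k \<iota>))"
proof -
  interpret series_setting p \<Delta> \<iota>
    using assms(2,3) by unfold_locales
  have "D \<in> End_series"
    using assms(4) by (simp add: U_group_def)
  then have "eps_d \<iota> \<Delta> euler_derivation D = eps \<iota> p \<Delta> D"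
    by (rule eps_d_euler)
  then show ?thesis
    using HS_imp_eps_d_Der euler_derivation_is_derivation eps_Der_imp_HS[OF assms(1,4)] by metis
qed

end
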